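(* If $\alpha>-1$, $\alpha\ne0$, then \begin{equation*} \langle\!\langle f_\alpha\rangle\!\rangle_{\mathbb R}= \langle\!\langle f_\alpha\rangle\!\rangle_{\mathbb R_+}\cdot \max_{0\le\eta\le1}\psi(\alpha,\eta), \end{equation*} where \begin{equation*} \psi(\alpha,\eta)=\left\{\begin{array}{ll} \displaystyle\frac{\left(1+\eta^{\alpha+1}\right)^{1/\alpha}}{(1+\eta)^{(\alpha+1)/\alpha}}+ \frac{(\alpha+1)^{(\alpha+1)/\alpha}}\alpha \left[\frac1{1+\eta^{\alpha+1}}-\frac1{1+\eta}\right],& \text{ if }\; 0\le\eta\le\eta_1,\\[10pt] \displaystyle 2\frac{\left(1+\eta^{\alpha+1}\right)^{1/\alpha}}{(1+\eta)^{(\alpha+1)/\alpha}},& \text{ if }\; \eta_1\le\eta\le1, \end{array}\right. \end{equation*} and $\eta_1=\eta_1(\alpha)\in(0,1)$ is the root of the equation \begin{equation*} \eta^\alpha=\frac1{1+\alpha(\eta+1)}. \end{equation*}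
   Context: Let $R$ be $\mathbb R$ or $\mathbb R_+=[0,\infty)$. For a non-negative function $f$ locally summable on $R$ and a bounded interval $I\subset R$, set $f_I=\frac1{|I|}\int_I f(x)\,dx$ and $\Omega(f;I)=\frac1{|I|}\int_I|f(x)-f_I|\,dx$. The relative oscillation is $\langle f\rangle_I=\Omega(f;I)/f_I$, and the Gurov--Reshetnyak "norm" of $f$ on $R$ is $\langle\!\langle f\rangle\!\rangle_R=\sup_{I\subset R}\langle f\rangle_I$, the supremum over bounded subintervals $I$ of $R$. Let $f_\alpha(x)=|x|^\alpha$ ($x\in\mathbb R$, $\alpha>-1$). (One has $\langle\!\langle f_\alpha\rangle\!\rangle_{\mathbb R_+}=\langle f_\alpha\rangle_{(0,1)}=2|\alpha|/(\alpha+1)^{(\alpha+1)/\alpha}$.) *)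

theory Defs
  imports "HOL-Analysis.Analysis"
begin

definition mean_val :: "(real \<Rightarrow> real) \<Rightarrow> real \<Rightarrow> real \<Rightarrow> real" where
  "mean_val f a b = (LINT x:{a..b}|lborel. f x) / (b - a)"

definition mean_osc :: "(real \<Rightarrow> real) \<Rightarrow> real \<Rightarrow> real \<Rightarrow> real" where
  "mean_osc f a b = (LINT x:{a..b}|lborel. \<bar>f x - mean_val f a b\<bar>) / (b - a)"

definition rel_osc :: "(real \<Rightarrow> real) \<Rightarrow> real \<Rightarrow> real \<Rightarrow> real" where
  "rel_osc f a b = mean_osc f a b / mean_val f a b"

definition GR_norm :: "(real \<Rightarrow> real) \<Rightarrow> real set \<Rightarrow> real" where
  "GR_norm f R = (SUP ab \<in> {(a, b). a < b \<and> {a..b} \<subseteq> R}. rel_osc f (fst ab) (snd ab))"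

definition f_alpha :: "real \<Rightarrow> real \<Rightarrow> real" where
  "f_alpha \<alpha> x = \<bar>x\<bar> powr \<alpha>"

definition eta1 :: "real \<Rightarrow> real" where
  "eta1 \<alpha> = (THE \<eta>. 0 < \<eta> \<and> \<eta> < 1 \<and> \<eta> powr \<alpha> = 1 / (1 + \<alpha> * (\<eta> + 1)))"

definition psi :: "real \<Rightarrow> real \<Rightarrow> real" where
  "psi \<alpha> \<eta> =
     (if \<eta> \<le> eta1 \<alpha> then
        (1 + \<eta> powr (\<alpha> + 1)) powr (1 / \<alpha>) / (1 + \<eta>) powr ((\<alpha> + 1) / \<alpha>)
        + (\<alpha> + 1) powr ((\<alpha> + 1) / \<alpha>) / \<alpha>
          * (1 / (1 + \<eta> powr (\<alpha> + 1)) - 1 / (1 + \<eta>))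
      else
        2 * (1 + \<eta> powr (\<alpha> + 1)) powr (1 / \<alpha>) / (1 + \<eta>) powr ((\<alpha> + 1) / \<alpha>))"

end

theory Submission
  imports Defs
begin

text \<open>
  Since \<open>f_alpha a\<close> is even and homogeneous, the relative oscillation is invariant under
  reflections and dilations, so every interval reduces either to one in \<open>[0, \<infinity>)\<close> or to
  \<open>[-e, 1]\<close> with \<open>0 \<le> e \<le> 1\<close>. On an interval with mean \<open>m\<close> let \<open>r = m powr (1 / a)\<close>,
  the level at which \<open>\<bar>x\<bar> powr a = m\<close>. As \<open>f_alpha a - m\<close> has integral zero, the mean
  oscillation is twice the integral of \<open>sgn a * (m - f_alpha a)\<close> over the part where
  \<open>\<bar>x\<bar> \<le> r\<close>. On \<open>[p, q] \<subseteq> [0, \<infinity>)\<close> this part is \<open>[p, r]\<close>; the monotonicity of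
  \<open>(z + 1) powr (a + 1) - z powr (a + 1)\<close> and Young's inequality then bound the relative
  oscillation by its value on \<open>[0, 1]\<close>. On \<open>[-e, 1]\<close> the part is \<open>[- min e r, r]\<close>, and
  \<open>e \<le> r\<close> holds exactly when \<open>e \<le> eta1 a\<close>; evaluating both cases yields the norm on
  \<open>[0, \<infinity>)\<close> times \<open>psi a e\<close>.
\<close>

section \<open>Inequalities for real powers\<close>

lemma sgn_powr_less_sgn_powr:
  fixes a x y :: real
  assumes "a \<noteq> 0" "0 < x" "x < y"
  shows "sgn a * x powr a < sgn a * y powr a"
  using assms by (cases "a > 0") (auto intro: powr_less_mono2 powr_less_mono2_neg)

lemma sgn_powr_le_sgn_powr_iff:
  fixes a x y :: real
  assumes "a \<noteq> 0" "0 < x" "0 < y"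
  shows "sgn a * x powr a \<le> sgn a * y powr a \<longleftrightarrow> x \<le> y"
  using sgn_powr_less_sgn_powr[OF assms(1,2)] sgn_powr_less_sgn_powr[OF assms(1,3)]
  by (metis linorder_not_le order_le_less order_less_irrefl)

lemma sgn_powr_increment_mono:
  fixes a z1 z2 :: real
  assumes a: "a > -1" "a \<noteq> 0" and z: "0 \<le> z1" "z1 \<le> z2"
  shows "sgn a * ((z1 + 1) powr (a + 1) - z1 powr (a + 1))
       \<le> sgn a * ((z2 + 1) powr (a + 1) - z2 powr (a + 1))"
proof (rule DERIV_nonneg_imp_increasing_open[OF z(2)])
  fix z :: real assume "z1 < z" "z < z2"
  then have z: "z > 0"
    using z by simp
  have "((\<lambda>z. sgn a * ((z + 1) powr (a + 1) - z powr (a + 1))) has_real_derivative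
          (a + 1) * (sgn a * (z + 1) powr a - sgn a * z powr a)) (at z)"
    using z a by (auto intro!: derivative_eq_intros simp: algebra_simps)
  moreover have "sgn a * z powr a \<le> sgn a * (z + 1) powr a"
    using sgn_powr_le_sgn_powr_iff[OF a(2) z, of "z + 1"] z by simp
  ultimately show "\<exists>y. ((\<lambda>z. sgn a * ((z + 1) powr (a + 1) - z powr (a + 1)))
                     has_real_derivative y) (at z) \<and> 0 \<le> y"
    using a by (intro exI conjI) auto
qed (use a z in \<open>intro continuous_intros continuous_on_powr', auto\<close>)

lemma powr_diff_eq_increment:
  fixes b p x :: real
  assumes "0 \<le> p" "p < x"
  shows "x powr b - p powr b = (x - p) powr b * ((p / (x - p) + 1) powr b - (p / (x - p)) powr b)"
proof -
  have "p / (x - p) + 1 = x / (x - p)"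
    using assms by (simp add: field_simps)
  then show ?thesis
    using assms by (simp add: powr_divide field_simps)
qed

lemma sgn_powr_ratio_le:
  fixes a p x q :: real
  assumes a: "a > -1" "a \<noteq> 0" and pxq: "0 \<le> p" "p \<le> x" "x \<le> q" "p < q"
  shows "sgn a * ((x - p) / (q - p)) powr (a + 1)
       \<le> sgn a * ((x powr (a + 1) - p powr (a + 1)) / (q powr (a + 1) - p powr (a + 1)))"
proof (cases "x = p")
  case False
  then have px: "p < x"
    using pxq by simp
  define h where "h z = (z + 1) powr (a + 1) - z powr (a + 1)" for z
  define L where "L = (x - p) / (q - p)"
  have h_pos: "h z > 0" if "z \<ge> 0" for z
    using that a by (simp add: h_def powr_less_mono2)
  have z: "0 \<le> p / (q - p)" "p / (q - p) \<le> p / (x - p)"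
    using pxq px by (auto intro: divide_left_mono)
  have ratio: "(x powr (a + 1) - p powr (a + 1)) / (q powr (a + 1) - p powr (a + 1))
        = L powr (a + 1) * h (p / (x - p)) / h (p / (q - p))"
    using powr_diff_eq_increment[of p x "a + 1"] powr_diff_eq_increment[of p q "a + 1"] pxq px
    by (simp add: h_def L_def powr_divide)
  have "sgn a * h (p / (q - p)) \<le> sgn a * h (p / (x - p))"
    unfolding h_def by (rule sgn_powr_increment_mono[OF a z])
  then have mono: "sgn a * L powr (a + 1) * h (p / (q - p)) \<le> sgn a * L powr (a + 1) * h (p / (x - p))"
    by (metis mult_left_mono powr_ge_zero mult.left_commute mult.assoc)
  have "sgn a * L powr (a + 1) = sgn a * L powr (a + 1) * h (p / (q - p)) / h (p / (q - p))"
    using h_pos[OF z(1)] by simp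
  also have "\<dots> \<le> sgn a * L powr (a + 1) * h (p / (x - p)) / h (p / (q - p))"
    by (rule divide_right_mono[OF mono]) (use h_pos[OF z(1)] in simp)
  finally show ?thesis
    unfolding ratio L_def by simp
qed simp

lemma diff_powr_le_of_pos:
  fixes a l :: real
  assumes a: "a > 0" and l: "0 \<le> l"
  shows "l - l powr (a + 1) \<le> a * (a + 1) powr (- 1 / a) / (a + 1)"
proof -
  define b where "b = a + 1"
  have b: "b > 0"
    using a by (simp add: b_def)
  have young: "(b powr (1/b) * l) * b powr (- 1/b)
        \<le> (b powr (1/b) * l) powr b / b + (b powr (- 1/b)) powr (b/a) / (b/a)"
    using a l by (intro Youngs_inequality) (auto simp: b_def field_simps)
  have "(b powr (1/b) * l) * b powr (- 1/b) = l"
    using b by (simp add: powr_add[symmetric])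
  moreover have "(b powr (1/b) * l) powr b / b = l powr b"
    using b l by (simp add: powr_mult powr_powr)
  moreover have "(b powr (- 1/b)) powr (b/a) / (b/a) = a * b powr (- 1 / a) / b"
    using b a by (simp add: powr_powr)
  ultimately have "l \<le> l powr b + a * b powr (- 1 / a) / b"
    using young by (simp only:)
  then show ?thesis
    by (simp add: b_def)
qed

lemma powr_diff_le_of_neg:
  fixes a l :: real
  assumes a: "a > -1" "a < 0" and l: "0 \<le> l"
  shows "l powr (a + 1) - l \<le> - a * (a + 1) powr (- 1 / a) / (a + 1)"
proof -
  define b where "b = a + 1"
  have b: "b > 0"
    using a by (simp add: b_def)
  have young: "l powr b * b \<le> (l powr b) powr (1/b) / (1/b) + b powr (- 1/a) / (- 1/a)"
    using a l by (intro Youngs_inequality) (auto simp: b_def field_simps)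
  have "(l powr b) powr (1/b) / (1/b) = b * l"
    using b l by (simp add: powr_powr)
  with young have "b * (l powr b - l) \<le> - a * b powr (- 1/a)"
    using a by (simp only:) (simp add: algebra_simps)
  then show ?thesis
    using b by (simp add: b_def field_simps)
qed

text \<open>The bound is the extremal value of \<open>l - l powr (a + 1)\<close>, attained at
  \<open>l = (a + 1) powr (- 1 / a)\<close>.\<close>

lemma sgn_mult_diff_powr_le:
  fixes a l :: real
  assumes a: "a > -1" "a \<noteq> 0" and l: "0 \<le> l"
  shows "sgn a * (l - l powr (a + 1)) \<le> \<bar>a\<bar> / (a + 1) powr ((a + 1) / a)"
proof -
  have "(a + 1) / a = 1 / a + 1"
    using a by (simp add: field_simps)
  then have "(a + 1) powr ((a + 1) / a) = (a + 1) powr (1 / a) * (a + 1)"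
    using a by (simp add: powr_add)
  then have bound: "\<bar>a\<bar> / (a + 1) powr ((a + 1) / a) = \<bar>a\<bar> * (a + 1) powr (- 1 / a) / (a + 1)"
    by (simp add: powr_minus_divide)
  show ?thesis
  proof (cases "a > 0")
    case True
    then show ?thesis
      using diff_powr_le_of_pos[OF True l] bound by simp
  next
    case False
    then show ?thesis
      using powr_diff_le_of_neg[OF a(1) _ l] a(2) bound by simp
  qed
qed

lemma powr_div_powr_succ:
  fixes a y d :: real
  assumes "a \<noteq> 0" "y > 0" "d > 0"
  shows "y powr (1 / a) / d powr ((a + 1) / a) = (y / d) powr (1 / a) / d"
proof -
  have "(a + 1) / a = 1 / a + 1"
    using assms(1) by (simp add: field_simps)
  then show ?thesis
    using assms by (simp add: powr_add powr_divide)
qed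

section \<open>Relative oscillation\<close>

lemma set_lborel_integral_eq_has_integral:
  fixes f :: "real \<Rightarrow> real"
  assumes meas: "f \<in> borel_measurable borel" and f: "(f has_integral I) {p..q}"
    and nonneg: "\<And>x. x \<in> {p..q} \<Longrightarrow> 0 \<le> f x"
  shows "set_integrable lborel {p..q} f" "(LBINT x:{p..q}. f x) = I"
proof -
  have "set_integrable lebesgue {p..q} f"
    using nonnegative_absolutely_integrable_1[OF has_integral_integrable[OF f] nonneg] .
  moreover have "(\<lambda>x. indicator {p..q} x *\<^sub>R f x) \<in> borel_measurable lborel"
    using meas by measurable
  ultimately show int: "set_integrable lborel {p..q} f"
    unfolding set_integrable_def using integrable_completion by blast
  show "(LBINT x:{p..q}. f x) = I"
    using set_borel_integral_eq_integral(2)[OF int] f by (simp add: integral_unique)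
qed

lemma has_integral_abs_sign_split:
  fixes g :: "real \<Rightarrow> real"
  assumes "p \<le> u" "u \<le> v" "v \<le> q" "finite S"
    and I: "(g has_integral I) {p..q}" and J: "(g has_integral J) {u..v}"
    and inner: "\<And>x. x \<in> {u..v} - S \<Longrightarrow> g x \<le> 0"
    and outer: "\<And>x. x \<in> {p..q} - {u..v} - S \<Longrightarrow> 0 \<le> g x"
  shows "((\<lambda>x. \<bar>g x\<bar>) has_integral I - 2 * J) {p..q}"
proof -
  have "((\<lambda>x. if x \<in> {u..v} then g x else 0) has_integral J) {p..q}"
    using J assms(1-3) by (subst has_integral_restrict_Int) (simp add: Int_absorb2)
  then have "((\<lambda>x. g x - 2 * (if x \<in> {u..v} then g x else 0)) has_integral I - 2 * J) {p..q}"
    by (intro has_integral_diff I has_integral_mult_right)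
  then show ?thesis
    by (rule has_integral_spike_finite[OF \<open>finite S\<close>, rotated])
       (use inner outer in \<open>force simp: abs_if\<close>)
qed

lemma rel_osc_reflect:
  assumes even: "\<And>x. f (- x) = f x"
  shows "rel_osc f (- q) (- p) = rel_osc f p q"
proof -
  have reflect: "(LBINT x:{-q..-p}. g x) = (LBINT x:{p..q}. g (- x))" for g :: "real \<Rightarrow> real"
  proof -
    have "{x. - x \<in> {-q..-p}} = {p..q}"
      by auto
    then show ?thesis
      by (subst set_integral_reflect) simp
  qed
  have "mean_val f (- q) (- p) = mean_val f p q"
    unfolding mean_val_def reflect even by simp
  moreover have "mean_osc f (- q) (- p) = mean_osc f p q"
    unfolding mean_osc_def reflect even \<open>mean_val f (- q) (- p) = mean_val f p q\<close> by simp
  ultimately show ?thesis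
    unfolding rel_osc_def by simp
qed

lemma set_integral_stretch:
  fixes g :: "real \<Rightarrow> real"
  assumes c: "c > 0"
  shows "(LBINT x:{p..q}. g x) = c * (LBINT x:{p/c..q/c}. g (c * x))"
proof -
  have "indicator {p..q} (c * x) = (indicator {p/c..q/c} x :: real)" for x
    using c by (auto simp: indicator_def field_simps)
  then show ?thesis
    unfolding set_lebesgue_integral_def
    using lborel_integral_real_affine[of c "\<lambda>x. indicator {p..q} x *\<^sub>R g x" 0] c by simp
qed

lemma rel_osc_stretch:
  assumes c: "c > 0" and k: "k > 0" and homogeneous: "\<And>x. f (c * x) = k * f x"
  shows "rel_osc f (p/c) (q/c) = rel_osc f p q"
proof -
  define m where "m = mean_val f p q"
  have len: "q/c - p/c = (q - p) / c"
    by (simp add: diff_divide_distrib)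
  have mv: "mean_val f (p/c) (q/c) = m / k"
    unfolding m_def mean_val_def set_integral_stretch[OF c, of p q f] homogeneous len
    using c k by simp
  have "\<bar>f (c * x) - m\<bar> = k * \<bar>f x - m / k\<bar>" for x
  proof -
    have "f (c * x) - m = k * (f x - m / k)"
      using k by (simp add: homogeneous field_simps)
    then show ?thesis
      using k by (simp add: abs_mult)
  qed
  then have mo: "mean_osc f (p/c) (q/c) = mean_osc f p q / k"
    unfolding mean_osc_def mv m_def[symmetric]
      set_integral_stretch[OF c, of p q "\<lambda>x. \<bar>f x - m\<bar>"] len
    using c k by simp
  show ?thesis
    unfolding rel_osc_def mo mv m_def using k by simp
qed

lemma rel_osc_le_two:
  fixes f :: "real \<Rightarrow> real"
  assumes f: "set_integrable lborel {p..q} f" and nonneg: "\<And>x. x \<in> {p..q} \<Longrightarrow> 0 \<le> f x"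
    and pq: "p < q" and pos: "mean_val f p q > 0"
  shows "rel_osc f p q \<le> 2"
proof -
  define m where "m = mean_val f p q"
  have const: "set_integrable lborel {p..q} (\<lambda>_. m)"
    by (intro borel_integrable_atLeastAtMost' continuous_on_const)
  have "(LBINT x:{p..q}. \<bar>f x - m\<bar>) \<le> (LBINT x:{p..q}. f x + m)"
    using f const nonneg pos
    by (intro set_integral_mono set_integrable_abs set_integral_diff(1) set_integral_add(1))
       (auto simp: m_def abs_le_iff)
  also have "\<dots> = 2 * m * (q - p)"
    using f const pq by (simp add: set_integral_add(2) set_integral_const m_def mean_val_def)
  finally show ?thesis
    using pq pos unfolding rel_osc_def mean_osc_def m_def[symmetric] by (simp add: field_simps)
qed

section \<open>The power function\<close>

lemma f_alpha_minus [simp]: "f_alpha a (- x) = f_alpha a x"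
  unfolding f_alpha_def by simp

lemma f_alpha_nonneg: "0 \<le> f_alpha a x"
  unfolding f_alpha_def by simp

lemma f_alpha_mult: "0 < c \<Longrightarrow> f_alpha a (c * x) = c powr a * f_alpha a x"
  unfolding f_alpha_def by (simp add: abs_mult powr_mult)

lemma borel_measurable_f_alpha [measurable]: "f_alpha a \<in> borel_measurable borel"
  unfolding f_alpha_def by measurable

definition f_alpha_primitive :: "real \<Rightarrow> real \<Rightarrow> real" where
  "f_alpha_primitive a x = sgn x * \<bar>x\<bar> powr (a + 1) / (a + 1)"

lemma f_alpha_primitive_nonneg: "0 \<le> x \<Longrightarrow> f_alpha_primitive a x = x powr (a + 1) / (a + 1)"
  unfolding f_alpha_primitive_def by (cases "x = 0") auto

lemma f_alpha_primitive_minus [simp]: "f_alpha_primitive a (- x) = - f_alpha_primitive a x"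
  unfolding f_alpha_primitive_def by simp

lemma has_real_derivative_f_alpha_primitive:
  assumes a: "a > -1" and x: "x \<noteq> 0"
  shows "(f_alpha_primitive a has_real_derivative f_alpha a x) (at x)"
proof (cases "x > 0")
  case True
  have "((\<lambda>y. y powr (a + 1) / (a + 1)) has_real_derivative \<bar>x\<bar> powr a) (at x)"
    using a True by (auto intro!: derivative_eq_intros)
  then show ?thesis
    unfolding f_alpha_def
    by (rule has_field_derivative_transform_within_open[where S = "{0<..}"])
       (use True in \<open>auto simp: f_alpha_primitive_nonneg f_alpha_def\<close>)
next
  case False
  with x have neg: "x < 0" by simp
  have "((\<lambda>y. - ((- y) powr (a + 1) / (a + 1))) has_real_derivative \<bar>x\<bar> powr a) (at x)"
    using a neg by (auto intro!: derivative_eq_intros)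
  then show ?thesis
    unfolding f_alpha_def
    by (rule has_field_derivative_transform_within_open[where S = "{..<0}"])
       (use neg in \<open>auto simp: f_alpha_primitive_def f_alpha_def\<close>)
qed

lemma continuous_f_alpha_primitive:
  assumes a: "a > -1"
  shows "continuous_on UNIV (f_alpha_primitive a)"
proof (intro continuous_at_imp_continuous_on ballI)
  fix x :: real
  show "isCont (f_alpha_primitive a) x"
  proof (cases "x = 0")
    case True
    have "((\<lambda>y. \<bar>y\<bar> powr (a + 1) / (a + 1)) \<longlongrightarrow> 0) (at 0)"
      using a by (auto intro!: tendsto_eq_intros)
    then have "(f_alpha_primitive a \<longlongrightarrow> 0) (at 0)"
      by (rule Lim_null_comparison[rotated])
         (use a in \<open>auto simp: f_alpha_primitive_def abs_mult abs_sgn_eq\<close>)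
    then show ?thesis
      using True by (simp add: isCont_def f_alpha_primitive_def)
  qed (use a in \<open>auto intro: DERIV_isCont has_real_derivative_f_alpha_primitive\<close>)
qed

lemma has_integral_f_alpha:
  assumes a: "a > -1" and "p \<le> q"
  shows "(f_alpha a has_integral f_alpha_primitive a q - f_alpha_primitive a p) {p..q}"
  by (rule fundamental_theorem_of_calculus_strong[where S = "{0}"])
     (use assms in \<open>auto simp: has_real_derivative_iff_has_vector_derivative[symmetric]
       intro: has_real_derivative_f_alpha_primitive continuous_on_subset[OF continuous_f_alpha_primitive]\<close>)

lemma f_alpha_primitive_strict_mono:
  assumes "a > -1"
  shows "strict_mono (f_alpha_primitive a)"
proof (rule strict_monoI)
  fix x y :: real assume "x < y"
  then consider "0 \<le> x" | "y \<le> 0" | "x < 0" "0 < y"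
    by linarith
  then show "f_alpha_primitive a x < f_alpha_primitive a y"
  proof cases
    case 1
    then show ?thesis
      using \<open>x < y\<close> assms by (simp add: f_alpha_primitive_nonneg powr_less_mono2 divide_strict_right_mono)
  next
    case 2
    then have "(- y) powr (a + 1) < (- x) powr (a + 1)"
      using \<open>x < y\<close> assms by (intro powr_less_mono2) auto
    then have "(- y) powr (a + 1) / (a + 1) < (- x) powr (a + 1) / (a + 1)"
      using assms by (simp add: divide_strict_right_mono)
    then show ?thesis
      using 2 \<open>x < y\<close> f_alpha_primitive_nonneg[of "- x" a] f_alpha_primitive_nonneg[of "- y" a]
      by simp
  next
    case 3
    then have "- ((- x) powr (a + 1) / (a + 1)) < 0" "0 < y powr (a + 1) / (a + 1)"
      using assms by simp_all
    then show ?thesis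
      using 3 f_alpha_primitive_nonneg[of "- x" a] f_alpha_primitive_nonneg[of y a] by simp
  qed
qed

lemma set_integrable_f_alpha:
  assumes "a > -1" "p \<le> q"
  shows "set_integrable lborel {p..q} (f_alpha a)"
  using set_lborel_integral_eq_has_integral(1)[OF _ has_integral_f_alpha[OF assms]]
  by (simp add: f_alpha_nonneg)

lemma mean_val_f_alpha:
  assumes "a > -1" "p < q"
  shows "mean_val (f_alpha a) p q = (f_alpha_primitive a q - f_alpha_primitive a p) / (q - p)"
  using set_lborel_integral_eq_has_integral(2)[OF _ has_integral_f_alpha[of a p q]] assms
  by (simp add: mean_val_def f_alpha_nonneg)

lemma mean_val_f_alpha_pos:
  assumes "a > -1" "p < q"
  shows "mean_val (f_alpha a) p q > 0"
  using assms strict_monoD[OF f_alpha_primitive_strict_mono[OF assms(1)] assms(2)]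
  by (simp add: mean_val_f_alpha)

text \<open>As \<open>0 powr a = 0\<close>, \<open>f_alpha a 0 = 0\<close> even for \<open>a < 0\<close>; the point \<open>0\<close> is an exception
  to the pointwise bound and has to be spiked away.\<close>

lemma sgn_mean_val_f_alpha_le:
  assumes a: "a > -1" and pq: "p < q" and c: "c > 0"
    and bound: "\<And>x. x \<in> {p..q} \<Longrightarrow> \<bar>x\<bar> \<le> c"
  shows "sgn a * mean_val (f_alpha a) p q \<le> sgn a * c powr a"
proof (cases "a = 0")
  case False
  define g where "g x = (if x = 0 then sgn a * c powr a else sgn a * f_alpha a x)" for x
  have int: "((\<lambda>x. sgn a * f_alpha a x) has_integral
               sgn a * (f_alpha_primitive a q - f_alpha_primitive a p)) {p..q}"
    using pq by (intro has_integral_mult_right has_integral_f_alpha a) simp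
  have "(g has_integral sgn a * (f_alpha_primitive a q - f_alpha_primitive a p)) {p..q}"
    by (rule has_integral_spike_finite[OF _ _ int, of "{0}"]) (simp_all add: g_def)
  moreover have "((\<lambda>x. sgn a * c powr a) has_integral sgn a * c powr a * (q - p)) {p..q}"
    using has_integral_const_real[of "sgn a * c powr a" p q] pq by (simp add: mult.commute)
  moreover have "g x \<le> sgn a * c powr a" if "x \<in> {p..q}" for x
    using sgn_powr_le_sgn_powr_iff[OF False, of "\<bar>x\<bar>" c] bound[OF that] c
    by (auto simp: g_def f_alpha_def)
  ultimately have "sgn a * (f_alpha_primitive a q - f_alpha_primitive a p) \<le> sgn a * c powr a * (q - p)"
    by (rule has_integral_le)
  then show ?thesis
    using pq by (simp add: mean_val_f_alpha[OF a pq] divide_le_eq mult_ac)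
qed simp

lemma sgn_mean_val_f_alpha_ge:
  assumes a: "a > -1" and pq: "p < q" and c: "c > 0"
    and bound: "\<And>x. x \<in> {p..q} \<Longrightarrow> c \<le> \<bar>x\<bar>"
  shows "sgn a * c powr a \<le> sgn a * mean_val (f_alpha a) p q"
proof (cases "a = 0")
  case False
  have "((\<lambda>x. sgn a * c powr a) has_integral sgn a * c powr a * (q - p)) {p..q}"
    using has_integral_const_real[of "sgn a * c powr a" p q] pq by (simp add: mult.commute)
  moreover have "((\<lambda>x. sgn a * f_alpha a x) has_integral
               sgn a * (f_alpha_primitive a q - f_alpha_primitive a p)) {p..q}"
    using pq by (intro has_integral_mult_right has_integral_f_alpha a) simp
  moreover have "sgn a * c powr a \<le> sgn a * f_alpha a x" if "x \<in> {p..q}" for x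
    using sgn_powr_le_sgn_powr_iff[OF False c, of "\<bar>x\<bar>"] bound[OF that] c
    by (auto simp: f_alpha_def)
  ultimately have "sgn a * c powr a * (q - p) \<le> sgn a * (f_alpha_primitive a q - f_alpha_primitive a p)"
    by (rule has_integral_le)
  then show ?thesis
    using pq by (simp add: mean_val_f_alpha[OF a pq] le_divide_eq mult_ac)
qed simp

lemma rel_osc_f_alpha_eq:
  assumes "a > -1" "p < q"
    and "((\<lambda>x. \<bar>f_alpha a x - mean_val (f_alpha a) p q\<bar>) has_integral J) {p..q}"
  shows "rel_osc (f_alpha a) p q = J / (f_alpha_primitive a q - f_alpha_primitive a p)"
proof -
  have "(LBINT x:{p..q}. \<bar>f_alpha a x - mean_val (f_alpha a) p q\<bar>) = J"
    by (rule set_lborel_integral_eq_has_integral(2)[OF _ assms(3)]) auto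
  then show ?thesis
    using assms(1,2) by (simp add: rel_osc_def mean_osc_def mean_val_f_alpha)
qed

text \<open>The sign of \<open>f_alpha a x - r powr a\<close> is that of \<open>sgn a * (\<bar>x\<bar> - r)\<close>, and the
  integral of \<open>f_alpha a - r powr a\<close> over \<open>[p, q]\<close> vanishes when \<open>r powr a\<close> is the mean.\<close>

lemma rel_osc_f_alpha_level:
  fixes a p q u v r :: real
  defines "F \<equiv> f_alpha_primitive a"
  assumes a: "a > -1" "a \<noteq> 0" and puvq: "p \<le> u" "u \<le> v" "v \<le> q" "p < q" and r: "r > 0"
    and mean: "mean_val (f_alpha a) p q = r powr a"
    and inner: "\<And>x. x \<in> {u..v} \<Longrightarrow> \<bar>x\<bar> \<le> r"
    and outer: "\<And>x. x \<in> {p..q} - {u..v} \<Longrightarrow> r \<le> \<bar>x\<bar>"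
  shows "rel_osc (f_alpha a) p q = 2 * sgn a * (r powr a * (v - u) - (F v - F u)) / (F q - F p)"
proof -
  define m where "m = r powr a"
  define g where "g x = sgn a * (f_alpha a x - m)" for x
  have has_int_g: "(g has_integral sgn a * (F y - F x - m * (y - x))) {x..y}" if "x \<le> y" for x y
    unfolding g_def F_def using has_integral_f_alpha[OF a(1) that] has_integral_const_real[of m x y]
    by (intro has_integral_mult_right has_integral_diff) (use that in \<open>auto simp: mult.commute\<close>)
  have "F q - F p = m * (q - p)"
    using mean mean_val_f_alpha[OF a(1) puvq(4)] puvq by (simp add: F_def m_def field_simps)
  then have "((\<lambda>x. \<bar>g x\<bar>) has_integral 0 - 2 * (sgn a * (F v - F u - m * (v - u)))) {p..q}"
    using has_int_g[of p q] has_int_g[of u v] puvq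
  proof (intro has_integral_abs_sign_split[where S = "{0}"])
    fix x assume "x \<in> {u..v} - {0}"
    then show "g x \<le> 0"
      using sgn_powr_le_sgn_powr_iff[OF a(2), of "\<bar>x\<bar>" r] inner r
      by (simp add: g_def m_def f_alpha_def right_diff_distrib)
  next
    fix x assume "x \<in> {p..q} - {u..v} - {0}"
    then show "0 \<le> g x"
      using sgn_powr_le_sgn_powr_iff[OF a(2), of r "\<bar>x\<bar>"] outer r
      by (simp add: g_def m_def f_alpha_def right_diff_distrib)
  qed auto
  moreover have "\<bar>g x\<bar> = \<bar>f_alpha a x - mean_val (f_alpha a) p q\<bar>" for x
    using a(2) by (simp add: g_def m_def mean abs_mult)
  ultimately show ?thesis
    using rel_osc_f_alpha_eq[OF a(1) puvq(4)] by (simp add: F_def m_def algebra_simps)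
qed

lemma rel_osc_f_alpha_le_two:
  assumes "a > -1" "p < q"
  shows "rel_osc (f_alpha a) p q \<le> 2"
  using assms by (intro rel_osc_le_two set_integrable_f_alpha mean_val_f_alpha_pos) (auto simp: f_alpha_nonneg)

lemma rel_osc_f_alpha_straddling:
  assumes pq: "p < 0" "0 < q"
  obtains e where "0 \<le> e" "e \<le> 1" "rel_osc (f_alpha a) p q = rel_osc (f_alpha a) (- e) 1"
proof (cases "- p \<le> q")
  case True
  have "rel_osc (f_alpha a) p q = rel_osc (f_alpha a) (p / q) (q / q)"
    using pq by (intro rel_osc_stretch[where k = "q powr a", symmetric]) (auto simp: f_alpha_mult)
  moreover have "0 \<le> - p / q" "- p / q \<le> 1"
    using True pq by (simp_all add: field_simps)
  ultimately show ?thesis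
    using that[of "- p / q"] pq by simp
next
  case False
  have "rel_osc (f_alpha a) p q = rel_osc (f_alpha a) (- q) (- p)"
    by (simp add: rel_osc_reflect)
  also have "\<dots> = rel_osc (f_alpha a) (- q / - p) (- p / - p)"
    using pq f_alpha_mult[of "- p" a] by (intro rel_osc_stretch[where k = "(- p) powr a", symmetric]) auto
  moreover have "0 \<le> q / - p" "q / - p \<le> 1"
    using False pq by (simp_all add: field_simps)
  ultimately show ?thesis
    using that[of "q / - p"] pq by simp
qed

section \<open>Intervals in the half-line\<close>

lemma level_mean_val_f_alpha_nonneg:
  fixes a p q :: real
  assumes a: "a > -1" "a \<noteq> 0" and pq: "0 \<le> p" "p < q"
  defines "r \<equiv> mean_val (f_alpha a) p q powr (1 / a)"
  shows "r > 0" "r powr a = mean_val (f_alpha a) p q" "p \<le> r" "r \<le> q"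
proof -
  have "mean_val (f_alpha a) p q > 0"
    using mean_val_f_alpha_pos a pq by simp
  then show r: "r > 0" "r powr a = mean_val (f_alpha a) p q"
    using a by (simp_all add: r_def powr_powr)
  have "sgn a * r powr a \<le> sgn a * q powr a"
    unfolding r(2) using pq by (intro sgn_mean_val_f_alpha_le a) auto
  then show "r \<le> q"
    using sgn_powr_le_sgn_powr_iff[OF a(2) r(1), of q] pq by simp
  show "p \<le> r"
  proof (cases "p = 0")
    case False
    then have "sgn a * p powr a \<le> sgn a * r powr a"
      unfolding r(2) using pq by (intro sgn_mean_val_f_alpha_ge a) auto
    then show ?thesis
      using sgn_powr_le_sgn_powr_iff[OF a(2) _ r(1), of p] pq False by simp
  qed (use r in simp)
qed

lemma rel_osc_f_alpha_nonneg_eq: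
  fixes a p q :: real
  assumes a: "a > -1" "a \<noteq> 0" and pq: "0 \<le> p" "p < q"
  defines "r \<equiv> mean_val (f_alpha a) p q powr (1 / a)"
  shows "rel_osc (f_alpha a) p q = 2 * sgn a * ((r - p) / (q - p)
           - (r powr (a + 1) - p powr (a + 1)) / (q powr (a + 1) - p powr (a + 1)))"
proof -
  note r = level_mean_val_f_alpha_nonneg[OF a pq, folded r_def]
  define D where "D = (q powr (a + 1) - p powr (a + 1)) / (a + 1)"
  define E where "E = (r powr (a + 1) - p powr (a + 1)) / (a + 1)"
  have D: "D > 0"
    using pq a by (simp add: D_def powr_less_mono2)
  have F: "f_alpha_primitive a r - f_alpha_primitive a p = E"
          "f_alpha_primitive a q - f_alpha_primitive a p = D"
    using pq r by (simp_all add: f_alpha_primitive_nonneg D_def E_def diff_divide_distrib)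
  have "r powr a * (q - p) = D"
    using mean_val_f_alpha[OF a(1) pq(2)] pq by (simp add: r(2) F)
  then have "r powr a * (r - p) = (r - p) / (q - p) * D"
    using pq by (simp add: field_simps)
  then have "rel_osc (f_alpha a) p q = 2 * sgn a * ((r - p) / (q - p) * D - E) / D"
    using r pq by (subst rel_osc_f_alpha_level[OF a, of p p r q r]) (auto simp: F)
  also have "\<dots> = 2 * sgn a * ((r - p) / (q - p) - E / D)"
    using D by (simp add: field_simps)
  also have "E / D = (r powr (a + 1) - p powr (a + 1)) / (q powr (a + 1) - p powr (a + 1))"
    using a by (simp add: D_def E_def)
  finally show ?thesis .
qed

lemma rel_osc_f_alpha_nonneg_le:
  assumes a: "a > -1" "a \<noteq> 0" and pq: "0 \<le> p" "p < q"
  shows "rel_osc (f_alpha a) p q \<le> 2 * \<bar>a\<bar> / (a + 1) powr ((a + 1) / a)"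
proof -
  define r where "r = mean_val (f_alpha a) p q powr (1 / a)"
  define L where "L = (r - p) / (q - p)"
  note r = level_mean_val_f_alpha_nonneg[OF a pq, folded r_def]
  have "rel_osc (f_alpha a) p q
          = 2 * (sgn a * (L - (r powr (a + 1) - p powr (a + 1)) / (q powr (a + 1) - p powr (a + 1))))"
    using rel_osc_f_alpha_nonneg_eq[OF a pq] by (simp add: r_def L_def)
  also have "\<dots> \<le> 2 * (sgn a * (L - L powr (a + 1)))"
    using sgn_powr_ratio_le[OF a pq(1) r(3,4) pq(2)] unfolding L_def[symmetric]
    by (simp only: right_diff_distrib)
  also have "\<dots> \<le> 2 * \<bar>a\<bar> / (a + 1) powr ((a + 1) / a)"
    using sgn_mult_diff_powr_le[OF a, of L] r pq by (simp add: L_def)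
  finally show ?thesis .
qed

section \<open>The root eta1\<close>

text \<open>\<open>(a + 1) * (1 + x) * (mean_val (f_alpha a) (- x) 1 - x powr a) = 1 - eta1_crit a x\<close>,
  so \<open>eta1 a\<close> is where the level of the mean over \<open>[- x, 1]\<close> crosses \<open>x\<close>.\<close>

definition eta1_crit :: "real \<Rightarrow> real \<Rightarrow> real" where
  "eta1_crit a x = (a + 1) * x powr a + a * x powr (a + 1)"

lemma sgn_eta1_crit_strict_mono:
  assumes a: "a > -1" "a \<noteq> 0" and xy: "0 < x" "x < y"
  shows "sgn a * eta1_crit a x < sgn a * eta1_crit a y"
proof -
  have "(a + 1) * (sgn a * x powr a) < (a + 1) * (sgn a * y powr a)"
    using sgn_powr_less_sgn_powr[OF a(2) xy] a by simp
  moreover have "\<bar>a\<bar> * x powr (a + 1) < \<bar>a\<bar> * y powr (a + 1)"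
    using a xy by (simp add: powr_less_mono2)
  ultimately show ?thesis
    by (simp add: eta1_crit_def algebra_simps abs_sgn)
qed

lemma eta1_equation_iff:
  fixes a x :: real
  assumes "x > 0"
  shows "x powr a = 1 / (1 + a * (x + 1)) \<longleftrightarrow> eta1_crit a x = 1"
proof -
  have crit: "eta1_crit a x = x powr a * (1 + a * (x + 1))"
    using assms by (simp add: eta1_crit_def powr_add algebra_simps)
  show ?thesis
  proof (cases "1 + a * (x + 1) = 0")
    case True
    then show ?thesis
      using assms by (simp add: crit)
  next
    case False
    then show ?thesis
      by (simp add: crit field_simps)
  qed
qed

lemma eta1_crit_root_exists:
  fixes a :: real
  assumes a: "a > -1" "a \<noteq> 0"
  shows "\<exists>x. 0 < x \<and> x < 1 \<and> eta1_crit a x = 1"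
proof -
  have cont: "continuous_on {lo..1} (eta1_crit a)" if "0 \<le> lo" "a > 0 \<or> lo > 0" for lo
    unfolding eta1_crit_def using a that by (intro continuous_intros continuous_on_powr') auto
  have at1: "eta1_crit a 1 = 1 + 2 * a"
    by (simp add: eta1_crit_def)
  show ?thesis
  proof (cases "a > 0")
    case True
    have "eta1_crit a 0 = 0"
      by (simp add: eta1_crit_def)
    then obtain x where "0 \<le> x" "x \<le> 1" "eta1_crit a x = 1"
      using IVT'[of "eta1_crit a" 0 1 1] cont[of 0] at1 True by auto
    then show ?thesis
      using at1 True \<open>eta1_crit a 0 = 0\<close> by (intro exI[of _ x]) (auto simp: le_less)
  next
    case False
    then have neg: "a < 0"
      using a by simp
    \<comment> \<open>chosen so that \<open>(a + 1) * x0 powr a = 1 - a\<close>\<close>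
    define x0 where "x0 = ((1 - a) / (a + 1)) powr (1 / a)"
    have base: "(1 - a) / (a + 1) > 1"
      using a neg by (simp add: field_simps)
    have x0: "0 < x0" "x0 < 1"
      using base neg powr_less_mono2_neg[of "1 / a" 1 "(1 - a) / (a + 1)"] by (auto simp: x0_def)
    have "x0 powr (a + 1) \<le> 1"
      using x0 a by (intro powr_le1) auto
    then have "1 \<le> eta1_crit a x0"
      using a neg base by (simp add: eta1_crit_def x0_def powr_powr mult_le_cancel_left_neg)
    then obtain x where "x0 \<le> x" "x \<le> 1" "eta1_crit a x = 1"
      using IVT2'[of "eta1_crit a" 1 1 x0] cont[of x0] at1 neg x0 by auto
    then show ?thesis
      using at1 neg x0 by (intro exI[of _ x]) (auto simp: le_less)
  qed
qed

lemma ex1_eta1_equation: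
  fixes a :: real
  assumes a: "a > -1" "a \<noteq> 0"
  shows "\<exists>!\<eta>. 0 < \<eta> \<and> \<eta> < 1 \<and> \<eta> powr a = 1 / (1 + a * (\<eta> + 1))"
proof -
  obtain x where x: "0 < x" "x < 1" "eta1_crit a x = 1"
    using eta1_crit_root_exists[OF a] by blast
  have "y = x" if "0 < y" "eta1_crit a y = 1" for y
    using sgn_eta1_crit_strict_mono[OF a, of x y] sgn_eta1_crit_strict_mono[OF a, of y x] x that
    by (metis less_irrefl linorder_neqE_linordered_idom)
  then show ?thesis
    using x eta1_equation_iff by metis
qed

lemma eta1_root:
  fixes a :: real
  assumes "a > -1" "a \<noteq> 0"
  shows "0 < eta1 a" "eta1 a < 1" "eta1_crit a (eta1 a) = 1"
  using theI'[OF ex1_eta1_equation[OF assms]] eta1_equation_iff unfolding eta1_def[symmetric]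
  by auto

lemma le_eta1_iff:
  fixes a x :: real
  assumes a: "a > -1" "a \<noteq> 0" and x: "x > 0"
  shows "x \<le> eta1 a \<longleftrightarrow> sgn a * eta1_crit a x \<le> sgn a"
  using sgn_eta1_crit_strict_mono[OF a x, of "eta1 a"]
    sgn_eta1_crit_strict_mono[OF a eta1_root(1)[OF a], of x] eta1_root[OF a]
  by (metis linorder_not_le mult.right_neutral order_le_less)

section \<open>Intervals [-e, 1]\<close>

lemma mean_val_f_alpha_centered:
  assumes "a > -1" "0 \<le> e"
  shows "mean_val (f_alpha a) (- e) 1 = (1 + e powr (a + 1)) / ((a + 1) * (1 + e))"
  using assms f_alpha_primitive_nonneg[of e a] f_alpha_primitive_nonneg[of 1 a]
  by (simp add: mean_val_f_alpha add_divide_distrib)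

lemma le_eta1_iff_le_level:
  fixes a e :: real
  assumes a: "a > -1" "a \<noteq> 0" and e: "0 \<le> e"
  shows "e \<le> eta1 a \<longleftrightarrow> e \<le> mean_val (f_alpha a) (- e) 1 powr (1 / a)"
proof (cases "e = 0")
  case False
  then have e: "e > 0"
    using e by simp
  define m where "m = mean_val (f_alpha a) (- e) 1"
  have m: "m > 0"
    unfolding m_def using mean_val_f_alpha_pos a e by simp
  have d: "(a + 1) * (1 + e) > 0"
    using a e by simp
  have "(m - e powr a) * ((a + 1) * (1 + e)) = 1 - eta1_crit a e"
    using a e d by (simp add: m_def mean_val_f_alpha_centered eta1_crit_def powr_add field_simps)
  then have "sgn a * (m - e powr a) * ((a + 1) * (1 + e)) = sgn a - sgn a * eta1_crit a e"
    by (metis mult.assoc mult.right_neutral right_diff_distrib)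
  then have "sgn a * e powr a \<le> sgn a * m \<longleftrightarrow> sgn a * eta1_crit a e \<le> sgn a"
    using d zero_le_mult_iff[of "sgn a * (m - e powr a)" "(a + 1) * (1 + e)"]
    by (auto simp: right_diff_distrib)
  moreover have "sgn a * m = sgn a * (m powr (1 / a)) powr a"
    using a m by (simp add: powr_powr)
  ultimately show ?thesis
    unfolding m_def[symmetric] using sgn_powr_le_sgn_powr_iff[OF a(2) e, of "m powr (1 / a)"] m
      le_eta1_iff[OF a e] by simp
qed (use eta1_root[OF a] in auto)

lemma rel_osc_f_alpha_centered:
  fixes a e :: real
  assumes a: "a > -1" "a \<noteq> 0" and e: "0 \<le> e" "e \<le> 1"
  defines "m \<equiv> mean_val (f_alpha a) (- e) 1"
  defines "r \<equiv> m powr (1 / a)"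
  defines "s \<equiv> min e r"
  shows "rel_osc (f_alpha a) (- e) 1 =
           2 * sgn a * (a * r / ((a + 1) * (1 + e)) + (s - s powr (a + 1) / ((a + 1) * m)) / (1 + e))"
proof -
  define b where "b = a + 1"
  define c where "c = 1 + e"
  have b: "b > 0"
    using a by (simp add: b_def)
  have c: "c > 0"
    using e by (simp add: c_def)
  have m: "m > 0" "(1 + e powr b) / b = m * c"
    using mean_val_f_alpha_pos[OF a(1), of "- e" 1] mean_val_f_alpha_centered[OF a(1) e(1)] e
    by (simp_all add: m_def b_def c_def)
  have r: "r > 0" "r powr a = m"
    using m(1) a by (simp_all add: r_def powr_powr)
  have "sgn a * r powr a \<le> sgn a * 1 powr a"
    unfolding r(2) m_def using e by (intro sgn_mean_val_f_alpha_le a) auto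
  then have r1: "r \<le> 1"
    using sgn_powr_le_sgn_powr_iff[OF a(2) r(1), of 1] by simp
  have s: "0 \<le> s" "s \<le> r" "s \<le> e"
    using e r by (auto simp: s_def)
  have "rel_osc (f_alpha a) (- e) 1 = 2 * sgn a * (r powr a * (r - - s)
          - (f_alpha_primitive a r - f_alpha_primitive a (- s)))
          / (f_alpha_primitive a 1 - f_alpha_primitive a (- e))"
  proof (rule rel_osc_f_alpha_level[OF a])
    fix x assume "x \<in> {- e..1} - {- s..r}"
    then show "r \<le> \<bar>x\<bar>"
      by (auto simp: s_def)
  qed (use e s r r1 in \<open>auto simp: m_def\<close>)
  also have "\<dots> = 2 * sgn a * (m * (r + s) - (r * m + s powr b) / b) / (m * c)"
  proof -
    have "r powr b = r * m"
      using r by (simp add: b_def powr_add)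
    then show ?thesis
      using r s e m(2)
      by (simp add: b_def[symmetric] c_def f_alpha_primitive_nonneg add_divide_distrib[symmetric]
          diff_divide_distrib[symmetric])
  qed
  also have "\<dots> = 2 * sgn a * ((b - 1) * r / (b * c) + (s - s powr b / (b * m)) / c)"
    using m(1) b c by (simp add: field_simps)
  finally show ?thesis
    by (simp add: b_def c_def)
qed

lemma rel_osc_f_alpha_centered_cases:
  fixes a e :: real
  assumes a: "a > -1" "a \<noteq> 0" and e: "0 \<le> e" "e \<le> 1"
  defines "r \<equiv> mean_val (f_alpha a) (- e) 1 powr (1 / a)"
  shows "rel_osc (f_alpha a) (- e) 1 =
           (if e \<le> r then 2 * \<bar>a\<bar> * r / ((a + 1) * (1 + e))
                          + 2 * sgn a * (1 / (1 + e powr (a + 1)) - 1 / (1 + e))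
            else 4 * \<bar>a\<bar> * r / ((a + 1) * (1 + e)))"
proof -
  define b where "b = a + 1"
  define c where "c = 1 + e"
  define m where "m = mean_val (f_alpha a) (- e) 1"
  define E where "E = e powr b"
  have b: "b > 0"
    using a by (simp add: b_def)
  have c: "c > 0" "e = c - 1"
    using e by (simp_all add: c_def)
  have E: "1 + E > 0"
    by (simp add: E_def add_pos_nonneg)
  have m: "m > 0" "b * m * c = 1 + E"
    using mean_val_f_alpha_pos[OF a(1), of "- e" 1] mean_val_f_alpha_centered[OF a(1) e(1)] b c(1)
    by (simp_all add: m_def b_def c_def E_def)
  have r: "r > 0" "r powr a = m"
    using m(1) a by (simp_all add: r_def m_def[symmetric] powr_powr)
  have formula: "rel_osc (f_alpha a) (- e) 1
      = 2 * sgn a * (a * r / (b * c) + (min e r - min e r powr b / (b * m)) / c)"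
    using rel_osc_f_alpha_centered[OF a e] by (simp add: r_def m_def b_def c_def)
  show ?thesis
  proof (cases "e \<le> r")
    case True
    have "E * c / (1 + E) = E * c / (b * m * c)"
      by (simp add: m(2))
    then have Ebm: "E / (b * m) = E * c / (1 + E)"
      using c(1) by simp
    have "(e - E / (b * m)) / c = 1 / (1 + E) - 1 / c"
      unfolding Ebm using E c by (simp add: divide_simps) (simp add: algebra_simps)
    then show ?thesis
      using formula True
      by (simp add: E_def b_def[symmetric] c_def[symmetric] abs_sgn distrib_left mult_ac)
  next
    case False
    have "r powr b = r * m"
      using r by (simp add: b_def powr_add)
    then have "r powr b / (b * m) = r / b"
      using m(1) by simp
    moreover have "(r - r / b) / c = (b - 1) * r / (b * c)"
      using b c(1) by (simp add: field_simps)
    ultimately have "(r - r powr b / (b * m)) / c = a * r / (b * c)"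
      by (simp add: b_def)
    then show ?thesis
      using formula False by (simp add: b_def[symmetric] c_def[symmetric] abs_sgn mult_ac)
  qed
qed

lemma psi_zero:
  assumes "a > -1" "a \<noteq> 0"
  shows "psi a 0 = 1"
  using eta1_root(1)[OF assms] by (simp add: psi_def)

lemma psi_main_term_eq:
  fixes a e :: real
  assumes a: "a > -1" "a \<noteq> 0" and e: "0 \<le> e"
  shows "(1 + e powr (a + 1)) powr (1 / a) / (1 + e) powr ((a + 1) / a)
           = (a + 1) powr ((a + 1) / a) * mean_val (f_alpha a) (- e) 1 powr (1 / a) / ((a + 1) * (1 + e))"
proof -
  define b where "b = a + 1"
  have b: "b > 0"
    using a by (simp add: b_def)
  have "(1 + e powr b) powr (1 / a) / (1 + e) powr (b / a)
          = b powr (b / a) * ((1 + e powr b) powr (1 / a) / (b * (1 + e)) powr (b / a))"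
    using b e by (simp add: powr_mult)
  also have "(1 + e powr b) powr (1 / a) / (b * (1 + e)) powr (b / a)
               = ((1 + e powr b) / (b * (1 + e))) powr (1 / a) / (b * (1 + e))"
    unfolding b_def using a b e by (intro powr_div_powr_succ) (auto simp: b_def add_pos_nonneg)
  finally show ?thesis
    using mean_val_f_alpha_centered[OF a(1) e] by (simp add: b_def)
qed

lemma rel_osc_f_alpha_centered_eq_psi:
  fixes a e :: real
  assumes a: "a > -1" "a \<noteq> 0" and e: "0 \<le> e" "e \<le> 1"
  shows "rel_osc (f_alpha a) (- e) 1 = 2 * \<bar>a\<bar> / (a + 1) powr ((a + 1) / a) * psi a e"
proof -
  define b where "b = a + 1"
  define E where "E = e powr b"
  define r where "r = mean_val (f_alpha a) (- e) 1 powr (1 / a)"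
  define N where "N = 2 * \<bar>a\<bar> / b powr (b / a)"
  define P where "P = (1 + E) powr (1 / a) / (1 + e) powr (b / a)"
  define C where "C = b powr (b / a) / a"
  have b: "b > 0"
    using a by (simp add: b_def)
  have psi: "psi a e = (if e \<le> eta1 a then P + C * (1 / (1 + E) - 1 / (1 + e)) else 2 * P)"
    by (simp add: psi_def P_def C_def b_def E_def)
  have NP: "N * P = 2 * \<bar>a\<bar> * r / (b * (1 + e))"
    using psi_main_term_eq[OF a e(1)] b by (simp add: N_def P_def r_def E_def b_def)
  have NC: "N * C = 2 * sgn a"
    using b a(2) by (simp add: N_def C_def abs_sgn)
  have "N * psi a e = (if e \<le> r then 2 * \<bar>a\<bar> * r / (b * (1 + e))
                                      + 2 * sgn a * (1 / (1 + E) - 1 / (1 + e))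
                           else 4 * \<bar>a\<bar> * r / (b * (1 + e)))"
  proof (cases "e \<le> eta1 a")
    case True
    then have "N * psi a e = N * P + N * C * (1 / (1 + E) - 1 / (1 + e))"
      by (simp add: psi algebra_simps)
    then show ?thesis
      using True le_eta1_iff_le_level[OF a e(1)] NP NC by (simp add: r_def)
  next
    case False
    then have "N * psi a e = 2 * (N * P)"
      by (simp add: psi)
    then show ?thesis
      using False le_eta1_iff_le_level[OF a e(1)] NP by (simp add: r_def)
  qed
  then show ?thesis
    using rel_osc_f_alpha_centered_cases[OF a e] by (simp add: N_def r_def b_def E_def)
qed

lemma bdd_above_psi:
  assumes a: "a > -1" "a \<noteq> 0"
  shows "bdd_above (psi a ` {0..1})"
proof (rule bdd_aboveI2)
  fix e :: real assume "e \<in> {0..1}"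
  then have "2 * \<bar>a\<bar> / (a + 1) powr ((a + 1) / a) * psi a e \<le> 2"
    using rel_osc_f_alpha_centered_eq_psi[OF a] rel_osc_f_alpha_le_two[OF a(1), of "- e" 1] by simp
  then show "psi a e \<le> (a + 1) powr ((a + 1) / a) / \<bar>a\<bar>"
    using a by (simp add: field_simps)
qed

lemma rel_osc_f_alpha_le_psi:
  assumes a: "a > -1" "a \<noteq> 0" and pq: "p < q"
  shows "\<exists>e\<in>{0..1}. rel_osc (f_alpha a) p q \<le> 2 * \<bar>a\<bar> / (a + 1) powr ((a + 1) / a) * psi a e"
proof -
  consider "0 \<le> p" | "q \<le> 0" | "p < 0" "0 < q"
    by linarith
  then show ?thesis
  proof cases
    case 1
    then show ?thesis
      using rel_osc_f_alpha_nonneg_le[OF a 1 pq] psi_zero[OF a] by (intro bexI[of _ 0]) auto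
  next
    case 2
    then show ?thesis
      using rel_osc_f_alpha_nonneg_le[OF a, of "- q" "- p"] rel_osc_reflect[of "f_alpha a" q p]
        psi_zero[OF a] pq
      by (intro bexI[of _ 0]) auto
  next
    case 3
    then obtain e where "0 \<le> e" "e \<le> 1" "rel_osc (f_alpha a) p q = rel_osc (f_alpha a) (- e) 1"
      by (rule rel_osc_f_alpha_straddling)
    then show ?thesis
      using rel_osc_f_alpha_centered_eq_psi[OF a] by (intro bexI[of _ e]) auto
  qed
qed

section \<open>The Gurov--Reshetnyak norms\<close>

lemma cSUP_eq_mult_cSUP:
  fixes f :: "'a \<Rightarrow> real" and g :: "'b \<Rightarrow> real"
  assumes c: "c > 0" and A: "A \<noteq> {}" and B: "B \<noteq> {}" and bdd: "bdd_above (g ` B)"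
    and le: "\<And>x. x \<in> A \<Longrightarrow> \<exists>y\<in>B. f x \<le> c * g y"
    and ge: "\<And>y. y \<in> B \<Longrightarrow> \<exists>x\<in>A. c * g y \<le> f x"
  shows "(SUP x\<in>A. f x) = c * (SUP y\<in>B. g y)"
proof (rule antisym)
  have upper: "f x \<le> c * (SUP y\<in>B. g y)" if "x \<in> A" for x
  proof -
    obtain y where "y \<in> B" "f x \<le> c * g y"
      using le[OF \<open>x \<in> A\<close>] by blast
    moreover have "g y \<le> (SUP y\<in>B. g y)"
      using \<open>y \<in> B\<close> bdd by (rule cSUP_upper)
    ultimately show ?thesis
      using c by (meson mult_left_mono less_imp_le order_trans)
  qed
  then show "(SUP x\<in>A. f x) \<le> c * (SUP y\<in>B. g y)"
    using A by (intro cSUP_least)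
  have bdd_f: "bdd_above (f ` A)"
    using upper by (intro bdd_aboveI2)
  have "g y \<le> (SUP x\<in>A. f x) / c" if "y \<in> B" for y
  proof -
    obtain x where "x \<in> A" "c * g y \<le> f x"
      using ge[OF \<open>y \<in> B\<close>] by blast
    moreover have "f x \<le> (SUP x\<in>A. f x)"
      using \<open>x \<in> A\<close> bdd_f by (rule cSUP_upper)
    ultimately show ?thesis
      using c by (simp add: field_simps)
  qed
  then have "(SUP y\<in>B. g y) \<le> (SUP x\<in>A. f x) / c"
    using B by (intro cSUP_least)
  then show "c * (SUP y\<in>B. g y) \<le> (SUP x\<in>A. f x)"
    using c by (simp add: field_simps)
qed

lemma GR_norm_f_alpha_nonneg:
  assumes a: "a > -1" "a \<noteq> 0"
  shows "GR_norm (f_alpha a) {0..} = 2 * \<bar>a\<bar> / (a + 1) powr ((a + 1) / a)"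
  unfolding GR_norm_def
proof (rule cSup_eq_maximum)
  show "2 * \<bar>a\<bar> / (a + 1) powr ((a + 1) / a)
          \<in> (\<lambda>ab. rel_osc (f_alpha a) (fst ab) (snd ab)) ` {(p, q). p < q \<and> {p..q} \<subseteq> {0..}}"
    using rel_osc_f_alpha_centered_eq_psi[OF a, of 0] psi_zero[OF a]
    by (intro image_eqI[of _ _ "(0, 1)"]) auto
qed (auto intro!: rel_osc_f_alpha_nonneg_le a)

lemma GR_norm_f_alpha_UNIV:
  assumes a: "a > -1" "a \<noteq> 0"
  shows "GR_norm (f_alpha a) UNIV = 2 * \<bar>a\<bar> / (a + 1) powr ((a + 1) / a) * (SUP \<eta>\<in>{0..1}. psi a \<eta>)"
  unfolding GR_norm_def
proof (rule cSUP_eq_mult_cSUP)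
  show "{(p, q). p < q \<and> {p..q} \<subseteq> (UNIV :: real set)} \<noteq> {}"
    by (auto intro!: exI[of _ "(0, 1)"])
  show "\<exists>ab\<in>{(p, q). p < q \<and> {p..q} \<subseteq> UNIV}.
          2 * \<bar>a\<bar> / (a + 1) powr ((a + 1) / a) * psi a e \<le> rel_osc (f_alpha a) (fst ab) (snd ab)"
    if "e \<in> {0..1}" for e
    using that rel_osc_f_alpha_centered_eq_psi[OF a] by (intro bexI[of _ "(- e, 1)"]) auto
qed (use a bdd_above_psi rel_osc_f_alpha_le_psi in auto)

theorem theorem2p1:
  fixes \<alpha> :: real
  assumes "\<alpha> > -1" and "\<alpha> \<noteq> 0"
  shows "(\<exists>!\<eta>. 0 < \<eta> \<and> \<eta> < 1 \<and> \<eta> powr \<alpha> = 1 / (1 + \<alpha> * (\<eta> + 1)))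
         \<and> GR_norm (f_alpha \<alpha>) UNIV
             = GR_norm (f_alpha \<alpha>) {0..} * (SUP \<eta> \<in> {0..1}. psi \<alpha> \<eta>)"
  using ex1_eta1_equation[OF assms] GR_norm_f_alpha_UNIV[OF assms] GR_norm_f_alpha_nonneg[OF assms]
  by simp

end
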